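(* For each $j=1,\dots,m$ there exists $A_j>0$ such that for all $t>0$ and all $N\ge1$, \[\frac{a_j^N(NX_N(t))}{N}\le A_j\quad\text{a.s.}\]
   Context: Fix integers $n,m\ge1$, vectors $\nu_1,\dots,\nu_m\in\mathbb{Z}^n$ and $c=(c_1,\dots,c_m)$ with all $c_j>0$; $|\cdot|$ is a fixed norm. For each $N\ge1$ and $j$, $a_j^N(x)=c_jb_j^N(x)$ with $b_j^N:\mathbb{R}^n\to\mathbb{R}$ nonnegative on $\mathbb{Z}_+^n$. Standing assumptions: (i) for each $j$ and $x\in\mathbb{R}_+^n$ the limit $a_j(x)=\lim_Na_j^N(Nx)/N$ exists, and for each compact $K\subset\mathbb{R}_+^n$ there is $B_K>0$ with $|a_j^N(Nx)/N-a_j(x)|\le B_K/N$ for $x\in K$, $N\ge1$, all $j$; (ii) each $a_j$ is continuously differentiable on $\mathbb{R}^n$; (iii) $x_0\in\mathbb{R}_+^n$ is fixed, $N$ ranges over positive integers with $Nx_0\in\mathbb{Z}_+^n$, and on a probability space with independent unit-rate Poisson processes $Y_1,\dots,Y_m$, $X^N$ solves $X^N(t)=Nx_0+\sum_jY_j\big(\int_0^ta_j^N(X^N(s))ds\big)\nu_j$; (iv) with $X_N(t)=X^N(t)/N$, there is $\Gamma$ with $|X_N(t)|\le\Gamma$ a.s. for all $t\ge0$, $N$. *)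

theory Defs
  imports "HOL-Analysis.Analysis" "HOL-Probability.Probability"
begin

definition Rplus :: "(real^'n) set" where
  "Rplus = {x. \<forall>i. 0 \<le> x $ i}"

definition Zplus :: "(real^'n) set" where
  "Zplus = {x. \<forall>i. x $ i \<in> \<int> \<and> 0 \<le> x $ i}"

definition Zvec :: "(real^'n) set" where
  "Zvec = {x. \<forall>i. x $ i \<in> \<int>}"

definition is_norm :: "(real^'n \<Rightarrow> real) \<Rightarrow> bool" where
  "is_norm nrm \<longleftrightarrow> (\<forall>x. 0 \<le> nrm x) \<and> (\<forall>x. nrm x = 0 \<longleftrightarrow> x = 0)
     \<and> (\<forall>r x. nrm (r *\<^sub>R x) = \<bar>r\<bar> * nrm x) \<and> (\<forall>x y. nrm (x + y) \<le> nrm x + nrm y)"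

definition C1_on_UNIV :: "(real^'n \<Rightarrow> real) \<Rightarrow> bool" where
  "C1_on_UNIV f \<longleftrightarrow> (\<exists>D :: (real^'n) \<Rightarrow> ((real^'n) \<Rightarrow>\<^sub>L real).
      (\<forall>x. (f has_derivative blinfun_apply (D x)) (at x)) \<and> continuous_on UNIV D)"

definition unit_poisson_process :: "'a measure \<Rightarrow> (real \<Rightarrow> 'a \<Rightarrow> nat) \<Rightarrow> bool" where
  "unit_poisson_process M Y \<longleftrightarrow>
     (\<forall>t. Y t \<in> measurable M (count_space UNIV)) \<and>
     (AE \<omega> in M. Y 0 \<omega> = 0 \<and> mono_on {0..} (\<lambda>t. Y t \<omega>) \<and>
        (\<forall>t\<ge>0. continuous (at_right t) (\<lambda>s. real (Y s \<omega>)))) \<and>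
     (\<forall>s t. 0 \<le> s \<and> s < t \<longrightarrow>
        distr M (count_space UNIV) (\<lambda>\<omega>. Y t \<omega> - Y s \<omega>) = measure_pmf (poisson_pmf (t - s))) \<and>
     (\<forall>ts :: real list. sorted ts \<and> ts \<noteq> [] \<and> 0 \<le> hd ts \<longrightarrow>
        prob_space.indep_vars M (\<lambda>_. count_space UNIV) (\<lambda>i \<omega>. Y (ts ! Suc i) \<omega> - Y (ts ! i) \<omega>)
          {..<length ts - 1})"

end

theory Submission
  imports Defs
begin

text \<open>The scaled process stays in the compact set of points of the orthant of norm at most
  \<open>\<Gamma>\<close>. On that set the limit rate \<open>a\<^sub>j\<close> is continuous, hence bounded, and the rate assumption
  keeps \<open>a\<^sub>j\<^sup>N(N x)/N\<close> within \<open>B/N \<le> B\<close> of it, so \<open>a\<^sub>j\<^sup>N(N X\<^sub>N(t))/N\<close> is bounded almost surely.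
  The only real work is to see that an arbitrary norm on \<open>\<real>\<^sup>n\<close> has compact sublevel sets,
  i.e. is equivalent to the Euclidean norm.\<close>

lemma is_norm_sum_le:
  assumes "is_norm nrm" "finite S"
  shows "nrm (\<Sum>i\<in>S. f i) \<le> (\<Sum>i\<in>S. nrm (f i))"
  using assms(2)
proof (induction S rule: finite_induct)
  case empty
  then show ?case using assms(1) unfolding is_norm_def by (metis order_refl sum.empty)
next
  case (insert x F)
  then show ?case using assms(1) unfolding is_norm_def by (smt (verit) sum.insert)
qed

lemma is_norm_minus_commute:
  assumes "is_norm nrm"
  shows "nrm (x - y) = nrm (y - x)"
  using assms unfolding is_norm_def
  by (metis abs_minus_cancel abs_one minus_diff_eq mult_1 scaleR_minus1_left)

lemma is_norm_diff_abs_le: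
  assumes "is_norm nrm"
  shows "\<bar>nrm x - nrm y\<bar> \<le> nrm (x - y)"
proof -
  have "nrm x \<le> nrm (x - y) + nrm y" "nrm y \<le> nrm (y - x) + nrm x"
    using assms unfolding is_norm_def by (metis diff_add_cancel)+
  then show ?thesis using is_norm_minus_commute[OF assms, of x y] by linarith
qed

lemma is_norm_le_mult_norm:
  fixes nrm :: "real^'n \<Rightarrow> real"
  assumes "is_norm nrm"
  obtains C where "C \<ge> 0" "\<And>x. nrm x \<le> C * norm x"
proof
  show "(\<Sum>b\<in>Basis. nrm b) \<ge> 0"
    using assms unfolding is_norm_def by (simp add: sum_nonneg)
  fix x :: "real^'n"
  have "nrm x = nrm (\<Sum>b\<in>Basis. (x \<bullet> b) *\<^sub>R b)" by (simp add: euclidean_representation)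
  also have "\<dots> \<le> (\<Sum>b\<in>Basis. nrm ((x \<bullet> b) *\<^sub>R b))" by (rule is_norm_sum_le[OF assms]) simp
  also have "\<dots> = (\<Sum>b\<in>Basis. \<bar>x \<bullet> b\<bar> * nrm b)" using assms unfolding is_norm_def by simp
  also have "\<dots> \<le> (\<Sum>b\<in>Basis. norm x * nrm b)"
    using Basis_le_norm assms unfolding is_norm_def by (intro sum_mono mult_right_mono) auto
  finally show "nrm x \<le> (\<Sum>b\<in>Basis. nrm b) * norm x" by (simp add: sum_distrib_left mult.commute)
qed

lemma is_norm_continuous_on:
  fixes nrm :: "real^'n \<Rightarrow> real"
  assumes "is_norm nrm"
  shows "continuous_on S nrm"
proof -
  obtain C where C: "C \<ge> 0" "\<And>x. nrm x \<le> C * norm x" using is_norm_le_mult_norm[OF assms] by blast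
  have "C-lipschitz_on S nrm"
  proof (rule lipschitz_onI[OF _ C(1)])
    fix x y :: "real^'n"
    have "dist (nrm x) (nrm y) \<le> nrm (x - y)"
      using is_norm_diff_abs_le[OF assms] by (simp add: dist_real_def)
    also have "\<dots> \<le> C * dist x y" using C(2) by (simp add: dist_norm)
    finally show "dist (nrm x) (nrm y) \<le> C * dist x y" .
  qed
  then show ?thesis by (rule lipschitz_on_continuous_on)
qed

text \<open>The minimum of \<open>nrm\<close> over the compact Euclidean unit sphere is the constant.\<close>

lemma is_norm_ge_mult_norm:
  fixes nrm :: "real^'n \<Rightarrow> real"
  assumes "is_norm nrm"
  obtains \<mu> where "\<mu> > 0" "\<And>x. \<mu> * norm x \<le> nrm x"
proof -
  have "sphere (0::real^'n) 1 \<noteq> {}"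
    using vector_choose_size[of 1] by (auto simp: sphere_def)
  then obtain z where z: "z \<in> sphere 0 1" and z_min: "\<And>y. y \<in> sphere 0 1 \<Longrightarrow> nrm z \<le> nrm y"
    using continuous_attains_inf[OF compact_sphere _ is_norm_continuous_on[OF assms]] by blast
  have "nrm z > 0"
    using z assms unfolding is_norm_def by (metis less_eq_real_def norm_zero mem_sphere_0 zero_neq_one)
  moreover have "nrm z * norm x \<le> nrm x" for x
  proof (cases "x = 0")
    case True
    then show ?thesis using assms unfolding is_norm_def by simp
  next
    case False
    then have "nrm z \<le> nrm ((1 / norm x) *\<^sub>R x)" by (intro z_min) simp
    also have "\<dots> = nrm x / norm x" using assms unfolding is_norm_def by simp
    finally show ?thesis using False by (simp add: field_simps)
  qed
  ultimately show ?thesis using that by blast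
qed

lemma compact_is_norm_sublevel:
  fixes nrm :: "real^'n \<Rightarrow> real"
  assumes "is_norm nrm"
  shows "compact {x. nrm x \<le> r}"
proof -
  obtain \<mu> where \<mu>: "\<mu> > 0" "\<And>x. \<mu> * norm x \<le> nrm x" using is_norm_ge_mult_norm[OF assms] by blast
  have "norm x \<le> r / \<mu>" if "nrm x \<le> r" for x
    using \<mu> that by (smt (verit) mult.commute pos_le_divide_eq)
  then have "bounded {x. nrm x \<le> r}" unfolding bounded_iff by blast
  moreover have "closed {x. nrm x \<le> r}"
    by (intro closed_Collect_le is_norm_continuous_on[OF assms] continuous_on_const)
  ultimately show ?thesis by (simp add: compact_eq_bounded_closed)
qed

lemma C1_on_UNIV_continuous_on:
  assumes "C1_on_UNIV f"
  shows "continuous_on S f"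
  using assms has_derivative_continuous continuous_at_imp_continuous_on
  unfolding C1_on_UNIV_def by blast

lemma bounded_above_if_uniform_rate:
  fixes f :: "nat \<Rightarrow> 'a::metric_space \<Rightarrow> real"
  assumes "compact K" "continuous_on K g" "B > 0"
    and rate: "\<And>x N. x \<in> K \<Longrightarrow> N \<ge> 1 \<Longrightarrow> \<bar>f N x - g x\<bar> \<le> B / real N"
  obtains A where "A > 0" "\<And>x N. x \<in> K \<Longrightarrow> N \<ge> 1 \<Longrightarrow> f N x \<le> A"
proof -
  obtain C where C: "C > 0" "\<And>x. x \<in> K \<Longrightarrow> \<bar>g x\<bar> \<le> C"
    using compact_imp_bounded[OF compact_continuous_image[OF assms(2,1)]]
    unfolding bounded_pos by auto
  have "f N x \<le> C + B" if "x \<in> K" "N \<ge> 1" for x N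
  proof -
    have "B / real N \<le> B" using \<open>B > 0\<close> that(2) by (simp add: field_simps)
    then show ?thesis using rate[OF that] C(2)[OF that(1)] by linarith
  qed
  then show ?thesis using that C(1) \<open>B > 0\<close> by (smt (verit))
qed

theorem lemma3p1:
  fixes m :: nat
    and \<nu> :: "nat \<Rightarrow> real^'n"
    and c :: "nat \<Rightarrow> real"
    and b aN :: "nat \<Rightarrow> nat \<Rightarrow> real^'n \<Rightarrow> real"
    and a :: "nat \<Rightarrow> real^'n \<Rightarrow> real"
    and nrm :: "real^'n \<Rightarrow> real"
    and x0 :: "real^'n"
    and M :: "'a measure"
    and Y :: "nat \<Rightarrow> real \<Rightarrow> 'a \<Rightarrow> nat"
    and X :: "nat \<Rightarrow> real \<Rightarrow> 'a \<Rightarrow> real^'n"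
    and \<Gamma> :: real
  assumes m_pos: "m \<ge> 1"
    and nu_int: "\<forall>j<m. \<nu> j \<in> Zvec"
    and c_pos: "\<forall>j<m. c j > 0"
    and aN_def: "\<forall>N j x. aN N j x = c j * b N j x"
    and b_nonneg: "\<forall>N\<ge>1. \<forall>j<m. \<forall>x\<in>Zplus. 0 \<le> b N j x"
    and norm: "is_norm nrm"
    and lim: "\<forall>j<m. \<forall>x\<in>Rplus.
               (\<lambda>N. aN N j (real N *\<^sub>R x) / real N) \<longlonglongrightarrow> a j x"
    and rate: "\<forall>K. compact K \<and> K \<subseteq> Rplus \<longrightarrow> (\<exists>B>0. \<forall>x\<in>K. \<forall>N\<ge>1. \<forall>j<m.
               \<bar>aN N j (real N *\<^sub>R x) / real N - a j x\<bar> \<le> B / real N)"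
    and C1: "\<forall>j<m. C1_on_UNIV (a j)"
    and x0: "x0 \<in> Rplus"
    and prob: "prob_space M"
    and poisson: "\<forall>j<m. unit_poisson_process M (Y j)"
    and indep: "prob_space.indep_vars M (\<lambda>_. Pi\<^sub>M UNIV (\<lambda>_::real. count_space (UNIV :: nat set)))
                  (\<lambda>j \<omega> t. Y j t \<omega>) {..<m}"
    and eqn: "\<forall>N\<ge>1. real N *\<^sub>R x0 \<in> Zplus \<longrightarrow>
               (AE \<omega> in M. \<forall>t\<ge>0. X N t \<omega> = real N *\<^sub>R x0 +
                  (\<Sum>j<m. real (Y j (integral {0..t} (\<lambda>s. aN N j (X N s \<omega>))) \<omega>) *\<^sub>R \<nu> j))"
    and state: "\<forall>N\<ge>1. real N *\<^sub>R x0 \<in> Zplus \<longrightarrow> (\<forall>t\<ge>0. AE \<omega> in M. X N t \<omega> \<in> Zplus)"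
    and bounded: "\<forall>N\<ge>1. real N *\<^sub>R x0 \<in> Zplus \<longrightarrow>
               (\<forall>t\<ge>0. AE \<omega> in M. nrm ((1 / real N) *\<^sub>R X N t \<omega>) \<le> \<Gamma>)"
  shows "\<forall>j<m. \<exists>A>0. \<forall>t>0. \<forall>N\<ge>1. real N *\<^sub>R x0 \<in> Zplus \<longrightarrow>
           (AE \<omega> in M. aN N j (real N *\<^sub>R ((1 / real N) *\<^sub>R X N t \<omega>)) / real N \<le> A)"
proof (intro allI impI)
  fix j assume "j < m"
  define K where "K = Rplus \<inter> {x. nrm x \<le> \<Gamma>}"
  have "compact K"
    unfolding K_def Rplus_def by (intro closed_Int_compact closed_positive_orthant compact_is_norm_sublevel norm)
  moreover have "K \<subseteq> Rplus" unfolding K_def by blast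
  ultimately obtain B where "B > 0" and B: "\<forall>x\<in>K. \<forall>N\<ge>1. \<forall>j<m.
      \<bar>aN N j (real N *\<^sub>R x) / real N - a j x\<bar> \<le> B / real N"
    using rate by blast
  obtain A where "A > 0"
      and A: "\<And>x N. x \<in> K \<Longrightarrow> N \<ge> 1 \<Longrightarrow> aN N j (real N *\<^sub>R x) / real N \<le> A"
  proof (rule bounded_above_if_uniform_rate[of K "a j" B])
    show "continuous_on K (a j)" using C1 \<open>j < m\<close> by (simp add: C1_on_UNIV_continuous_on)
  qed (use \<open>compact K\<close> \<open>B > 0\<close> B \<open>j < m\<close> in auto)
  have "AE \<omega> in M. aN N j (real N *\<^sub>R ((1 / real N) *\<^sub>R X N t \<omega>)) / real N \<le> A"
    if "t > 0" "N \<ge> 1" "real N *\<^sub>R x0 \<in> Zplus" for t N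
  proof -
    have "AE \<omega> in M. X N t \<omega> \<in> Zplus" "AE \<omega> in M. nrm ((1 / real N) *\<^sub>R X N t \<omega>) \<le> \<Gamma>"
      using state bounded that by auto
    then show ?thesis
    proof eventually_elim
      case (elim \<omega>)
      then have "(1 / real N) *\<^sub>R X N t \<omega> \<in> K"
        unfolding K_def Zplus_def Rplus_def by auto
      then show ?case using A \<open>N \<ge> 1\<close> by blast
    qed
  qed
  then show "\<exists>A>0. \<forall>t>0. \<forall>N\<ge>1. real N *\<^sub>R x0 \<in> Zplus \<longrightarrow>
      (AE \<omega> in M. aN N j (real N *\<^sub>R ((1 / real N) *\<^sub>R X N t \<omega>)) / real N \<le> A)"
    using \<open>A > 0\<close> by blast
qed

end
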